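(* Let $m\ge 2$ be an integer, let $z_1,z_2,\dots$ be i.i.d. standard normal random variables, let $I_1,\dots,I_m$ be positive integers, and set $N_1=I_1$, $N_i=N_{i-1}+I_i$ for $i>1$. Let $r_1,\dots,r_m>0$ and define the events $\zeta_i=\{\sum_{j=1}^{N_i} z_j^2>r_i^2\}$, $i=1,\dots,m$. For parameters $u_1^m=(u_1,\dots,u_m)$ with $0\le u_i<1/2$, define recursively $$h_1=u_1,\qquad h_i=h_{i-1}+u_i(1-2h_{i-1}),$$ $$g_1=e^{-u_1 r_m^2}(1-2u_1)^{-I_m/2},\qquad g_i=g_{i-1}\,e^{-u_i(1-2h_{i-1})r_{m-i+1}^2}\,(1-2h_i)^{-I_{m-i+1}/2}.$$ Then $$\Pr\left(\bigcap_{i=1}^m\zeta_i\right)\ge\max\left(0,\ \Pr\left(\bigcap_{i=2}^m\zeta_i\right)-\inf_{u_1^m}\frac{g_{m-1}(u_1^m)\,\Pr\left(\chi^2_{I_1}\le(1-2h_{m-1})r_1^2\right)}{(1-2h_{m-1})^{I_1/2}}\right),$$ the infimum being over all $u_1^m$ with $0\le u_i<1/2$ for all $i$.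
   Context: For a positive integer $k$, $\chi^2_k$ denotes a random variable with the central chi-square distribution with $k$ degrees of freedom. *)

theory Defs
  imports "HOL-Probability.Probability"
begin

definition chi2_density :: "nat \<Rightarrow> real \<Rightarrow> real" where
  "chi2_density k x =
     (if x > 0 then x powr (real k / 2 - 1) * exp (- x / 2) / (2 powr (real k / 2) * Gamma (real k / 2))
      else 0)"

definition chi2_cdf :: "nat \<Rightarrow> real \<Rightarrow> real" where
  "chi2_cdf k x = measure (density lborel (\<lambda>t. ennreal (chi2_density k t))) {..x}"

(* h_0 = 0, h_i = h_{i-1} + u_i (1 - 2 h_{i-1});  gives h_1 = u_1 *)
primrec hseq :: "(nat \<Rightarrow> real) \<Rightarrow> nat \<Rightarrow> real" where
  "hseq u 0 = 0"
| "hseq u (Suc i) = hseq u i + u (Suc i) * (1 - 2 * hseq u i)"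

(* g_0 = 1, g_i = g_{i-1} exp(-u_i (1-2h_{i-1}) r_{m-i+1}^2) (1-2h_i)^(-I_{m-i+1}/2);
   gives g_1 = exp(-u_1 r_m^2) (1-2u_1)^(-I_m/2) *)
primrec gseq :: "nat \<Rightarrow> (nat \<Rightarrow> nat) \<Rightarrow> (nat \<Rightarrow> real) \<Rightarrow> (nat \<Rightarrow> real) \<Rightarrow> nat \<Rightarrow> real" where
  "gseq m I r u 0 = 1"
| "gseq m I r u (Suc i) =
     gseq m I r u i * exp (- u (Suc i) * (1 - 2 * hseq u i) * (r (m - Suc i + 1))\<^sup>2)
       * (1 - 2 * hseq u (Suc i)) powr (- real (I (m - Suc i + 1)) / 2)"

end

theory Submission
  imports Defs
begin

(* Let T_l be the sum of the squares of the l-th block of I_l of the z_j, so that the T_l are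
   independent chi^2_(I_l) variables and zeta_i is the event S_i > r_i^2, S_i = T_1 + ... + T_i.
   The difference of the two probabilities is the probability that S_1 <= r_1^2 while S_i > r_i^2
   for all i >= 2.  For weights v_i >= 0 the indicator of this event is at most
   1{T_1 <= r_1^2} exp (sum_i v_i (S_i - r_i^2)); regrouped by the T_l, its expectation factorises
   into chi-square moment generating functions E exp (c T) = (1 - 2c)^(-k/2) and one truncated
   one, which exponential tilting evaluates to (1 - 2c)^(-k/2) Pr (chi^2_k <= (1 - 2c) r_1^2).
   The weights v_i = h_(m+1-i) - h_(m-i) make the coefficient of T_l equal to h_(m+1-l), and the
   bound becomes the expression under the infimum, for every admissible u. *)

section \<open>The chi-square distribution\<close>

lemma chi2_density_nonneg: "0 \<le> chi2_density k x"
proof (cases "k = 0")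
  case False
  then show ?thesis
    unfolding chi2_density_def
    by (auto intro!: divide_nonneg_nonneg mult_nonneg_nonneg Gamma_real_nonneg)
qed (simp add: chi2_density_def)

lemma chi2_density_nonpos [simp]: "x \<le> 0 \<Longrightarrow> chi2_density k x = 0"
  unfolding chi2_density_def by auto

lemma borel_measurable_chi2_density [measurable]: "chi2_density k \<in> borel_measurable borel"
  unfolding chi2_density_def by measurable

lemma chi2_density_1_square:
  assumes "x > 0"
  shows "chi2_density 1 (x\<^sup>2) * (2 * x) = 2 * std_normal_density x"
proof -
  have "(x\<^sup>2) powr (real 1 / 2 - 1) = (x powr 2) powr (-1/2)"
    using assms by (simp add: powr_realpow)
  also have "\<dots> = 1 / x"
    using assms by (simp add: powr_powr powr_minus_divide)
  finally have "(x\<^sup>2) powr (real 1 / 2 - 1) = 1 / x" .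
  moreover have "2 powr (real 1 / 2) * Gamma (real 1 / 2) = sqrt (2 * pi)"
    by (simp add: Gamma_one_half_real powr_half_sqrt real_sqrt_mult)
  ultimately show ?thesis
    using assms by (simp add: chi2_density_def std_normal_density_def field_simps)
qed

lemma nn_integral_std_normal_symmetric_interval:
  assumes "0 \<le> b"
  shows "(\<integral>\<^sup>+x. ennreal (std_normal_density x) * indicator {-b..b} x \<partial>lborel)
       = 2 * (\<integral>\<^sup>+x. ennreal (std_normal_density x) * indicator {0<..b} x \<partial>lborel)"
proof -
  have "(\<integral>\<^sup>+x. ennreal (std_normal_density x) * indicator {-b..b} x \<partial>lborel)
      = (\<integral>\<^sup>+x. ennreal (std_normal_density x) * indicator {-b..0} x \<partial>lborel)
        + (\<integral>\<^sup>+x. ennreal (std_normal_density x) * indicator {0<..b} x \<partial>lborel)"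
    by (subst nn_integral_add[symmetric]) (auto intro!: nn_integral_cong simp: indicator_def)
  also have "(\<integral>\<^sup>+x. ennreal (std_normal_density x) * indicator {-b..0} x \<partial>lborel)
      = (\<integral>\<^sup>+x. ennreal (std_normal_density x) * indicator {0..b} x \<partial>lborel)"
    by (subst nn_integral_real_affine[where c="-1" and t=0])
       (auto intro!: nn_integral_cong simp: indicator_def std_normal_density_def)
  also have "\<dots> = (\<integral>\<^sup>+x. ennreal (std_normal_density x) * indicator {0<..b} x \<partial>lborel)"
    by (intro nn_integral_cong_AE, use AE_lborel_singleton[of 0] in eventually_elim)
       (auto simp: indicator_def)
  finally show ?thesis by (simp add: mult_2)
qed

lemma nn_integral_chi2_1_atMost_square:
  assumes b: "0 < b"
  shows "(\<integral>\<^sup>+x. ennreal (chi2_density 1 x) * indicator {..b\<^sup>2} x \<partial>lborel)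
       = 2 * (\<integral>\<^sup>+x. ennreal (std_normal_density x) * indicator {0<..b} x \<partial>lborel)"
proof -
  have "(\<integral>\<^sup>+x. ennreal (chi2_density 1 x) * indicator {..b\<^sup>2} x \<partial>lborel)
      = (\<integral>\<^sup>+x. chi2_density 1 x * indicator {(\<lambda>x. x\<^sup>2) 0..(\<lambda>x. x\<^sup>2) b} x \<partial>lborel)"
    by (intro nn_integral_cong) (auto simp: indicator_def)
  also have "\<dots> = (\<integral>\<^sup>+x. chi2_density 1 (x\<^sup>2) * (2 * x) * indicator {0..b} x \<partial>lborel)"
    using b by (intro nn_integral_substitution)
      (auto simp: set_borel_measurable_def intro!: derivative_eq_intros continuous_intros)
  also have "\<dots> = (\<integral>\<^sup>+x. 2 * (ennreal (std_normal_density x) * indicator {0<..b} x) \<partial>lborel)"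
    by (intro nn_integral_cong)
      (auto simp: indicator_def ennreal_mult chi2_density_1_square[unfolded One_nat_def])
  also have "\<dots> = 2 * (\<integral>\<^sup>+x. ennreal (std_normal_density x) * indicator {0<..b} x \<partial>lborel)"
    by (rule nn_integral_cmult) simp
  finally show ?thesis .
qed

lemma (in prob_space) distributed_square_std_normal:
  assumes X: "distributed M lborel X std_normal_density"
  shows "distributed M lborel (\<lambda>\<omega>. (X \<omega>)\<^sup>2) (chi2_density 1)"
proof -
  have [measurable]: "X \<in> borel_measurable M"
    using distributed_measurable[OF X] by simp
  have X_emeasure: "emeasure M (X -` A \<inter> space M)
      = (\<integral>\<^sup>+x. ennreal (std_normal_density x) * indicator A x \<partial>lborel)" if "A \<in> sets borel" for A
    using distributed_emeasure[OF X] that by simp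
  have cdf: "(\<integral>\<^sup>+x. ennreal (chi2_density 1 x) * indicator {..a} x \<partial>lborel)
      = emeasure M {\<omega>\<in>space M. (X \<omega>)\<^sup>2 \<le> a}" for a
  proof (cases "a > 0")
    case False
    have "emeasure M {\<omega>\<in>space M. (X \<omega>)\<^sup>2 \<le> a} \<le> emeasure M (X -` {0} \<inter> space M)"
      using False by (intro emeasure_mono) (auto dest: order_trans[of _ a 0])
    also have "\<dots> = (\<integral>\<^sup>+x. ennreal (std_normal_density x) * indicator {0} x \<partial>lborel)"
      by (rule X_emeasure) simp
    also have "\<dots> = 0"
      by (rule nn_integral_zero', use AE_lborel_singleton[of 0] in eventually_elim) auto
    finally show ?thesis
      using False by (auto intro!: nn_integral_zero' AE_I2 simp: indicator_def)
  next
    case True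
    define b where "b = sqrt a"
    have b: "0 < b" "a = b\<^sup>2" using True by (auto simp: b_def)
    have "{\<omega>\<in>space M. (X \<omega>)\<^sup>2 \<le> a} = X -` {-b..b} \<inter> space M"
      using b by (auto simp: abs_le_square_iff[symmetric] abs_le_iff)
    then show ?thesis
      using b nn_integral_chi2_1_atMost_square[OF b(1)]
      by (simp add: X_emeasure nn_integral_std_normal_symmetric_interval)
  qed
  show ?thesis
  proof (rule distributedI_borel_atMost[where g="\<lambda>a. measure M {\<omega>\<in>space M. (X \<omega>)\<^sup>2 \<le> a}"])
    show "(\<integral>\<^sup>+x. chi2_density 1 x * indicator {..a} x \<partial>lborel)
        = ennreal (measure M {\<omega>\<in>space M. (X \<omega>)\<^sup>2 \<le> a})" for a
      unfolding emeasure_eq_measure[symmetric] cdf[symmetric]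
      by (intro nn_integral_cong) (simp split: split_indicator)
  qed (auto simp: chi2_density_nonneg emeasure_eq_measure)
qed

(* After the substitution y = x t, the convolution integrand of chi^2_1 and chi^2_k is a
   constant times the Beta (k/2, 1/2) kernel. *)
lemma chi2_convolution_kernel:
  fixes k :: nat
  assumes x: "x > 0"
  defines "a \<equiv> real k / 2"
  defines "Q \<equiv> x powr (a - 1/2 - 1) * exp (- x / 2)
                 / ((2 powr (1/2) * Gamma (1/2)) * (2 powr a * Gamma a))"
  shows "chi2_density 1 (x - x * t) * chi2_density k (x * t)
       = Q * (t powr (a - 1) * (1 - t) powr (1/2 - 1) * indicator {0..1} t)"
proof (cases "0 < t \<and> t < 1")
  case True
  then have t: "0 < t" "t < 1" by auto
  have "x - x * t > 0" "x * t > 0"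
    using x t by (auto simp: algebra_simps)
  moreover have "(x - x * t) powr (real 1 / 2 - 1) = x powr (- 1/2) * (1 - t) powr (1/2 - 1)"
    using x t by (simp add: powr_mult[symmetric] algebra_simps)
  moreover have "(x * t) powr (a - 1) = x powr (a - 1) * t powr (a - 1)"
    using x t by (simp add: powr_mult)
  moreover have "x powr (- 1/2) * x powr (a - 1) = x powr (a - 1/2 - 1)"
    using x by (simp add: powr_add[symmetric])
  moreover have "exp (- (x - x * t) / 2) * exp (- (x * t) / 2) = exp (- x / 2)"
    by (simp add: exp_add[symmetric] field_simps)
  ultimately show ?thesis
    using t unfolding chi2_density_def a_def[symmetric] Q_def
    by (simp add: indicator_def field_simps)
next
  case False
  then have "x * t \<le> 0 \<or> x - x * t \<le> 0"
    using x by (auto simp: mult_le_0_iff algebra_simps mult_le_cancel_left1)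
  moreover have "t powr (a - 1) * (1 - t) powr (1/2 - 1) * indicator {0..1} t = 0"
    using False by (auto simp: indicator_def)
  ultimately show ?thesis by auto
qed

lemma chi2_density_Suc_Beta:
  assumes x: "x > 0" and k: "k > 0"
  defines "a \<equiv> real k / 2"
  defines "Q \<equiv> x powr (a - 1/2 - 1) * exp (- x / 2)
                 / ((2 powr (1/2) * Gamma (1/2)) * (2 powr a * Gamma a))"
  shows "chi2_density (Suc k) x = x * Q * Beta a (1/2)"
proof -
  have a: "a > 0" using k by (simp add: a_def)
  have Gpos: "Gamma a > 0" "Gamma (1/2::real) > 0" "Gamma (a + 1/2) > 0"
    using a by (auto intro!: Gamma_real_pos)
  have "Gamma a * Gamma (1/2) = Beta a (1/2) * Gamma (a + 1/2)"
    by (rule Gamma_Gamma_Beta) (use a in \<open>auto elim!: nonpos_Ints_cases\<close>)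
  then have B: "Beta a (1/2) = Gamma a * Gamma (1/2) / Gamma (a + 1/2)"
    using Gpos by (simp add: field_simps)
  have "real (Suc k) / 2 = a + 1/2" by (simp add: a_def field_simps)
  moreover have "x * x powr (a - 1/2 - 1) = x powr (a + 1/2 - 1)"
    using x by (simp add: powr_add[symmetric] powr_mult_base)
  moreover have "2 powr (1/2) * 2 powr a = (2::real) powr (a + 1/2)"
    by (simp add: powr_add[symmetric] add.commute)
  ultimately show ?thesis
    using x Gpos unfolding chi2_density_def Q_def B
    by (auto simp: field_simps Gamma_one_half_real)
qed

lemma chi2_density_convolution:
  assumes k: "k > 0"
  shows "(\<integral>\<^sup>+y. ennreal (chi2_density 1 (x - y)) * ennreal (chi2_density k y) \<partial>lborel)
       = ennreal (chi2_density (Suc k) x)"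
proof (cases "x > 0")
  case False
  have "ennreal (chi2_density 1 (x - y)) * ennreal (chi2_density k y) = 0" for y
    using False by (cases "y \<le> 0") auto
  then show ?thesis
    using False by (simp del: mult_eq_0_iff)
next
  case x: True
  define a where "a = real k / 2"
  define Q where "Q = x powr (a - 1/2 - 1) * exp (- x / 2)
                 / ((2 powr (1/2) * Gamma (1/2)) * (2 powr a * Gamma a))"
  define \<beta> where "\<beta> = (\<lambda>t::real. t powr (a - 1) * (1 - t) powr (1/2 - 1))"
  have a: "a > 0" using k by (simp add: a_def)
  have Q: "Q \<ge> 0"
    using a unfolding Q_def by (auto intro!: divide_nonneg_nonneg mult_nonneg_nonneg Gamma_real_nonneg)
  have "(\<integral>\<^sup>+y. ennreal (chi2_density 1 (x - y)) * ennreal (chi2_density k y) \<partial>lborel)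
      = ennreal x * (\<integral>\<^sup>+t. ennreal (chi2_density 1 (x - (0 + x * t)) * chi2_density k (0 + x * t)) \<partial>lborel)"
    using x by (subst nn_integral_real_affine[where c=x and t=0])
      (auto simp: ennreal_mult[symmetric] chi2_density_nonneg)
  also have "\<dots> = ennreal x * (\<integral>\<^sup>+t. ennreal Q * (ennreal (\<beta> t) * indicator {0..1} t) \<partial>lborel)"
  proof (intro arg_cong2[where f="(*)"] refl nn_integral_cong)
    fix t :: real
    have "chi2_density 1 (x - (0 + x * t)) * chi2_density k (0 + x * t) = Q * (\<beta> t * indicator {0..1} t)"
      using chi2_convolution_kernel[OF x, where k=k and t=t] unfolding a_def Q_def \<beta>_def by simp
    then show "ennreal (chi2_density 1 (x - (0 + x * t)) * chi2_density k (0 + x * t))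
        = ennreal Q * (ennreal (\<beta> t) * indicator {0..1} t)"
      using Q by (simp add: ennreal_mult \<beta>_def split: split_indicator)
  qed
  also have "\<dots> = ennreal x * (ennreal Q * (\<integral>\<^sup>+t. ennreal (\<beta> t) * indicator {0..1} t \<partial>lborel))"
    by (subst nn_integral_cmult) (auto simp: \<beta>_def)
  also have "(\<integral>\<^sup>+t. ennreal (\<beta> t) * indicator {0..1} t \<partial>lborel) = ennreal (Beta a (1/2))"
    unfolding \<beta>_def
    by (rule nn_integral_has_integral_lebesgue'[OF _ has_integral_Beta_real[OF a]]) auto
  also have "ennreal x * (ennreal Q * ennreal (Beta a (1/2))) = ennreal (x * Q * Beta a (1/2))"
  proof -
    have "Beta a (1/2) \<ge> 0"
      using a by (simp add: Beta_def Gamma_real_pos less_imp_le)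
    then show ?thesis
      using x Q by (simp add: ennreal_mult mult.assoc)
  qed
  finally show ?thesis
    using chi2_density_Suc_Beta[OF x k] unfolding a_def Q_def by simp
qed

lemma (in prob_space) distributed_sum_squares_std_normal:
  assumes "finite J" "J \<noteq> {}" "indep_vars (\<lambda>_. borel) X J"
    and "\<And>j. j \<in> J \<Longrightarrow> distributed M lborel (X j) std_normal_density"
  shows "distributed M lborel (\<lambda>\<omega>. \<Sum>j\<in>J. (X j \<omega>)\<^sup>2) (chi2_density (card J))"
  using assms
proof (induction J rule: finite_ne_induct)
  case (singleton j)
  then show ?case using distributed_square_std_normal by simp
next
  case (insert j J)
  have "indep_vars (\<lambda>_. borel) (\<lambda>i \<omega>. (X i \<omega>)\<^sup>2) (insert j J)"
    by (rule indep_vars_compose2[OF insert.prems(1)]) simp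
  then have "indep_var borel (\<lambda>\<omega>. (X j \<omega>)\<^sup>2) borel (\<lambda>\<omega>. \<Sum>i\<in>J. (X i \<omega>)\<^sup>2)"
    using indep_vars_sum[OF insert.hyps(1,3)] by blast
  moreover have "distributed M lborel (\<lambda>\<omega>. \<Sum>i\<in>J. (X i \<omega>)\<^sup>2) (chi2_density (card J))"
    using insert by (auto intro: indep_vars_subset)
  ultimately have "distributed M lborel (\<lambda>\<omega>. (X j \<omega>)\<^sup>2 + (\<Sum>i\<in>J. (X i \<omega>)\<^sup>2))
      (\<lambda>x. \<integral>\<^sup>+y. ennreal (chi2_density 1 (x - y)) * ennreal (chi2_density (card J) y) \<partial>lborel)"
    using insert by (intro distributed_convolution distributed_square_std_normal) auto
  moreover have "card J > 0"
    using insert by (simp add: card_gt_0_iff)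
  then have "(\<lambda>x. \<integral>\<^sup>+y. ennreal (chi2_density 1 (x - y)) * ennreal (chi2_density (card J) y) \<partial>lborel)
      = (\<lambda>x. ennreal (chi2_density (Suc (card J)) x))"
    by (simp only: chi2_density_convolution)
  ultimately show ?case
    using insert by simp
qed

lemma chi2_density_exp_tilt:
  assumes s: "s > 0"
  shows "chi2_density k x * exp ((1 - s) / 2 * x) = s powr (- real k / 2) * (s * chi2_density k (s * x))"
proof (cases "x > 0")
  case False
  then have "s * x \<le> 0" using s by (simp add: mult_nonneg_nonpos)
  then show ?thesis using False by simp
next
  case True
  have "s * x > 0" using s True by simp
  moreover have "(s * x) powr (real k / 2 - 1) = s powr (real k / 2 - 1) * x powr (real k / 2 - 1)"
    using s True by (simp add: powr_mult)
  moreover have "s powr (- real k / 2) * (s * s powr (real k / 2 - 1)) = 1"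
    using s by (simp add: powr_add[symmetric] powr_mult_base)
  moreover have "exp (- x / 2) * exp ((1 - s) / 2 * x) = exp (- (s * x) / 2)"
    by (simp add: exp_add[symmetric] field_simps)
  ultimately show ?thesis
    using True unfolding chi2_density_def by (simp add: field_simps)
qed

(* Tilting by exp ((1 - s) x / 2) rescales chi^2_k to chi^2_k / s, up to the factor s^(-k/2);
   B is the image of A under x \<mapsto> s x. *)
lemma (in prob_space) nn_integral_chi2_exp_tilt:
  assumes T: "distributed M lborel T (chi2_density k)" and s: "s > 0"
    and AB: "\<And>x. s * x \<in> B \<longleftrightarrow> x \<in> A" and [measurable]: "A \<in> sets borel" "B \<in> sets borel"
  shows "(\<integral>\<^sup>+\<omega>. ennreal (indicator A (T \<omega>) * exp ((1 - s) / 2 * T \<omega>)) \<partial>M)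
       = ennreal (s powr (- real k / 2)) * emeasure (density lborel (chi2_density k)) B"
proof -
  have "(\<integral>\<^sup>+\<omega>. ennreal (indicator A (T \<omega>) * exp ((1 - s) / 2 * T \<omega>)) \<partial>M)
      = (\<integral>\<^sup>+x. ennreal (chi2_density k x) * ennreal (indicator A x * exp ((1 - s) / 2 * x)) \<partial>lborel)"
    by (rule distributed_nn_integral[OF T, symmetric]) simp
  also have "\<dots> = (\<integral>\<^sup>+x. ennreal (s powr (- real k / 2))
                      * (ennreal s * ennreal (chi2_density k (0 + s * x) * indicator B (0 + s * x))) \<partial>lborel)"
  proof (intro nn_integral_cong)
    fix x :: real
    have "chi2_density k x * (indicator A x * exp ((1 - s) / 2 * x))
        = s powr (- real k / 2) * (s * (chi2_density k (0 + s * x) * indicator B (0 + s * x)))"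
      using chi2_density_exp_tilt[OF s, of k x] AB[of x] by (simp add: indicator_def)
    then show "ennreal (chi2_density k x) * ennreal (indicator A x * exp ((1 - s) / 2 * x))
      = ennreal (s powr (- real k / 2))
        * (ennreal s * ennreal (chi2_density k (0 + s * x) * indicator B (0 + s * x)))"
      using s by (simp add: ennreal_mult[symmetric] chi2_density_nonneg)
  qed
  also have "\<dots> = ennreal (s powr (- real k / 2))
                   * (\<integral>\<^sup>+x. ennreal s * ennreal (chi2_density k (0 + s * x) * indicator B (0 + s * x)) \<partial>lborel)"
    by (subst nn_integral_cmult) auto
  also have "(\<integral>\<^sup>+x. ennreal s * ennreal (chi2_density k (0 + s * x) * indicator B (0 + s * x)) \<partial>lborel)
     = (\<integral>\<^sup>+x. ennreal (chi2_density k x * indicator B x) \<partial>lborel)"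
    using s by (subst nn_integral_real_affine[where c=s and t=0]) (auto simp: nn_integral_cmult)
  also have "\<dots> = emeasure (density lborel (chi2_density k)) B"
    by (subst emeasure_density) (auto intro!: nn_integral_cong simp: indicator_def)
  finally show ?thesis .
qed

lemma (in prob_space) nn_integral_exp_chi2:
  assumes T: "distributed M lborel T (chi2_density k)" and c: "c < 1/2"
  shows "(\<integral>\<^sup>+\<omega>. ennreal (exp (c * T \<omega>)) \<partial>M) = ennreal ((1 - 2 * c) powr (- real k / 2))"
proof -
  have "emeasure (density lborel (chi2_density k)) UNIV = 1"
    using distributed_measurable[OF T]
    by (simp add: distributed_distr_eq_density[OF T, symmetric] emeasure_distr emeasure_space_1)
  moreover have "(\<integral>\<^sup>+\<omega>. ennreal (indicator UNIV (T \<omega>) * exp ((1 - (1 - 2 * c)) / 2 * T \<omega>)) \<partial>M)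
     = ennreal ((1 - 2 * c) powr (- real k / 2)) * emeasure (density lborel (chi2_density k)) UNIV"
    using c by (intro nn_integral_chi2_exp_tilt[OF T]) auto
  ultimately show ?thesis by simp
qed

lemma (in prob_space) nn_integral_exp_chi2_atMost:
  assumes T: "distributed M lborel T (chi2_density k)" and c: "c < 1/2"
  shows "(\<integral>\<^sup>+\<omega>. ennreal (indicator {..a} (T \<omega>) * exp (c * T \<omega>)) \<partial>M)
     = ennreal ((1 - 2 * c) powr (- real k / 2) * chi2_cdf k ((1 - 2 * c) * a))"
proof -
  have s: "1 - 2 * c > 0" using c by simp
  interpret D: prob_space "density lborel (chi2_density k)"
    unfolding distributed_distr_eq_density[OF T, symmetric]
    by (rule prob_space_distr[OF distributed_measurable[OF T]])
  have "(\<integral>\<^sup>+\<omega>. ennreal (indicator {..a} (T \<omega>) * exp ((1 - (1 - 2 * c)) / 2 * T \<omega>)) \<partial>M)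
     = ennreal ((1 - 2 * c) powr (- real k / 2))
       * emeasure (density lborel (chi2_density k)) {..(1 - 2 * c) * a}"
    using s by (intro nn_integral_chi2_exp_tilt[OF T]) (auto simp: mult_le_cancel_left_pos)
  also have "emeasure (density lborel (chi2_density k)) {..(1 - 2 * c) * a}
      = ennreal (chi2_cdf k ((1 - 2 * c) * a))"
    unfolding chi2_cdf_def by (rule D.emeasure_eq_measure)
  finally show ?thesis
    by (simp add: ennreal_mult chi2_cdf_def)
qed

section \<open>An exponential Chebyshev bound for partial sums\<close>

lemma sum_weighted_partial_sums:
  fixes v T :: "nat \<Rightarrow> real"
  shows "(\<Sum>i=2..m. v i * (\<Sum>l=1..i. T l)) = (\<Sum>l=1..m. (\<Sum>i=max 2 l..m. v i) * T l)"
proof -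
  have "(\<Sum>i=2..m. v i * (\<Sum>l=1..i. T l)) = (\<Sum>i\<in>{2..m}. \<Sum>l\<in>{l\<in>{1..m}. l \<le> i}. v i * T l)"
  proof (intro sum.cong refl)
    fix i assume "i \<in> {2..m}"
    then have "{l\<in>{1..m}. l \<le> i} = {1..i}" by auto
    then show "v i * (\<Sum>l=1..i. T l) = (\<Sum>l\<in>{l\<in>{1..m}. l \<le> i}. v i * T l)"
      by (simp add: sum_distrib_left)
  qed
  also have "\<dots> = (\<Sum>l\<in>{1..m}. \<Sum>i\<in>{i\<in>{2..m}. l \<le> i}. v i * T l)"
    by (rule sum.swap_restrict) auto
  also have "\<dots> = (\<Sum>l=1..m. (\<Sum>i=max 2 l..m. v i) * T l)"
  proof (intro sum.cong refl)
    fix l :: nat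
    have "{i\<in>{2..m}. l \<le> i} = {max 2 l..m}" by auto
    then show "(\<Sum>i\<in>{i\<in>{2..m}. l \<le> i}. v i * T l) = (\<Sum>i=max 2 l..m. v i) * T l"
      by (simp add: sum_distrib_right)
  qed
  finally show ?thesis .
qed

lemma exp_weighted_partial_sums_ge_1:
  fixes t v b :: "nat \<Rightarrow> real"
  assumes "\<And>i. i \<in> {2..m} \<Longrightarrow> 0 \<le> v i" and "\<And>i. i \<in> {2..m} \<Longrightarrow> b i < (\<Sum>l=1..i. t l)"
  shows "1 \<le> exp (- (\<Sum>i=2..m. v i * b i)) * (\<Prod>l\<in>{1..m}. exp ((\<Sum>i=max 2 l..m. v i) * t l))"
proof -
  have "0 \<le> (\<Sum>i=2..m. v i * ((\<Sum>l=1..i. t l) - b i))"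
    using assms by (intro sum_nonneg mult_nonneg_nonneg) (auto simp: less_imp_le)
  also have "\<dots> = (\<Sum>l=1..m. (\<Sum>i=max 2 l..m. v i) * t l) - (\<Sum>i=2..m. v i * b i)"
    unfolding right_diff_distrib sum_subtractf sum_weighted_partial_sums ..
  finally show ?thesis
    by (simp add: exp_sum[symmetric] exp_add[symmetric])
qed

lemma (in prob_space) emeasure_partial_sums_le:
  fixes T :: "nat \<Rightarrow> 'a \<Rightarrow> real" and v b :: "nat \<Rightarrow> real" and a :: real
  assumes [measurable]: "\<And>l. T l \<in> borel_measurable M"
    and indep: "indep_vars (\<lambda>_. borel) T {1..m}" and m: "1 \<le> m"
    and v: "\<And>i. i \<in> {2..m} \<Longrightarrow> 0 \<le> v i"
  defines "c \<equiv> \<lambda>l. \<Sum>i=max 2 l..m. v i"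
  shows "emeasure M {\<omega>\<in>space M. T 1 \<omega> \<le> a \<and> (\<forall>i\<in>{2..m}. b i < (\<Sum>l=1..i. T l \<omega>))}
    \<le> ennreal (exp (- (\<Sum>i=2..m. v i * b i)))
      * (\<integral>\<^sup>+\<omega>. ennreal (indicator {..a} (T 1 \<omega>) * exp (c 1 * T 1 \<omega>)) \<partial>M)
      * (\<Prod>l\<in>{2..m}. \<integral>\<^sup>+\<omega>. ennreal (exp (c l * T l \<omega>)) \<partial>M)"
    (is "emeasure M ?E \<le> ennreal ?K * _ * _")
proof -
  define G where "G l x = (if l = 1 then indicator {..a} x else 1) * exp (c l * x)" for l x
  have G_nonneg: "0 \<le> G l x" for l x
    unfolding G_def by (simp split: split_indicator)
  have [measurable]: "G l \<in> borel_measurable borel" for l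
    unfolding G_def by (cases "l = 1") auto
  have "indicator ?E \<omega> \<le> ennreal (?K * (\<Prod>l\<in>{1..m}. G l (T l \<omega>)))" for \<omega>
  proof (cases "\<omega> \<in> ?E")
    case True
    then have "1 \<le> ?K * (\<Prod>l\<in>{1..m}. exp (c l * T l \<omega>))"
      unfolding c_def using v by (intro exp_weighted_partial_sums_ge_1) auto
    moreover have "(\<Prod>l\<in>{1..m}. G l (T l \<omega>))
        = indicator {..a} (T 1 \<omega>) * (\<Prod>l\<in>{1..m}. exp (c l * T l \<omega>))"
      using m unfolding G_def prod.distrib by (simp add: prod.delta)
    ultimately show ?thesis
      using True by simp
  qed (simp add: G_nonneg prod_nonneg)
  then have "(\<integral>\<^sup>+\<omega>. indicator ?E \<omega> \<partial>M) \<le> (\<integral>\<^sup>+\<omega>. ennreal (?K * (\<Prod>l\<in>{1..m}. G l (T l \<omega>))) \<partial>M)"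
    by (rule nn_integral_mono)
  moreover have "?E \<in> sets M"
    by measurable
  ultimately have "emeasure M ?E \<le> (\<integral>\<^sup>+\<omega>. ennreal (?K * (\<Prod>l\<in>{1..m}. G l (T l \<omega>))) \<partial>M)"
    by simp
  also have "\<dots> = (\<integral>\<^sup>+\<omega>. ennreal ?K * (\<Prod>l\<in>{1..m}. ennreal (G l (T l \<omega>))) \<partial>M)"
    by (simp add: ennreal_mult prod_ennreal G_nonneg prod_nonneg)
  also have "\<dots> = ennreal ?K * (\<integral>\<^sup>+\<omega>. (\<Prod>l\<in>{1..m}. ennreal (G l (T l \<omega>))) \<partial>M)"
    by (rule nn_integral_cmult) simp
  also have "(\<integral>\<^sup>+\<omega>. (\<Prod>l\<in>{1..m}. ennreal (G l (T l \<omega>))) \<partial>M)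
      = (\<Prod>l\<in>{1..m}. \<integral>\<^sup>+\<omega>. ennreal (G l (T l \<omega>)) \<partial>M)"
    by (intro indep_vars_nn_integral indep_vars_compose2[OF indep]) auto
  also have "{1..m} = insert 1 {2..m}"
    using m by auto
  finally show ?thesis
    by (simp add: G_def mult.assoc)
qed

lemma (in prob_space) prob_partial_sums_chi2_le:
  fixes T :: "nat \<Rightarrow> 'a \<Rightarrow> real" and v b :: "nat \<Rightarrow> real" and a :: real and I :: "nat \<Rightarrow> nat"
  assumes meas: "\<And>l. T l \<in> borel_measurable M"
    and indep: "indep_vars (\<lambda>_. borel) T {1..m}" and m: "1 \<le> m"
    and T: "\<And>l. l \<in> {1..m} \<Longrightarrow> distributed M lborel (T l) (chi2_density (I l))"
    and v: "\<And>i. i \<in> {2..m} \<Longrightarrow> 0 \<le> v i"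
  defines "c \<equiv> \<lambda>l. \<Sum>i=max 2 l..m. v i"
  assumes c: "\<And>l. l \<in> {1..m} \<Longrightarrow> c l < 1/2"
  shows "prob {\<omega>\<in>space M. T 1 \<omega> \<le> a \<and> (\<forall>i\<in>{2..m}. b i < (\<Sum>l=1..i. T l \<omega>))}
    \<le> exp (- (\<Sum>i=2..m. v i * b i))
      * ((1 - 2 * c 1) powr (- real (I 1) / 2) * chi2_cdf (I 1) ((1 - 2 * c 1) * a))
      * (\<Prod>l\<in>{2..m}. (1 - 2 * c l) powr (- real (I l) / 2))"
proof -
  have "emeasure M {\<omega>\<in>space M. T 1 \<omega> \<le> a \<and> (\<forall>i\<in>{2..m}. b i < (\<Sum>l=1..i. T l \<omega>))}
    \<le> ennreal (exp (- (\<Sum>i=2..m. v i * b i)))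
      * (\<integral>\<^sup>+\<omega>. ennreal (indicator {..a} (T 1 \<omega>) * exp (c 1 * T 1 \<omega>)) \<partial>M)
      * (\<Prod>l\<in>{2..m}. \<integral>\<^sup>+\<omega>. ennreal (exp (c l * T l \<omega>)) \<partial>M)"
    unfolding c_def by (rule emeasure_partial_sums_le[OF meas indep m v])
  also have "(\<integral>\<^sup>+\<omega>. ennreal (indicator {..a} (T 1 \<omega>) * exp (c 1 * T 1 \<omega>)) \<partial>M)
      = ennreal ((1 - 2 * c 1) powr (- real (I 1) / 2) * chi2_cdf (I 1) ((1 - 2 * c 1) * a))"
    using m by (intro nn_integral_exp_chi2_atMost T c) auto
  also have "(\<Prod>l\<in>{2..m}. \<integral>\<^sup>+\<omega>. ennreal (exp (c l * T l \<omega>)) \<partial>M)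
      = (\<Prod>l\<in>{2..m}. ennreal ((1 - 2 * c l) powr (- real (I l) / 2)))"
    by (intro prod.cong refl nn_integral_exp_chi2 T c) auto
  finally show ?thesis
    using c m by (simp add: emeasure_eq_measure prod_ennreal ennreal_mult[symmetric] chi2_cdf_def
        prod_nonneg)
qed

section \<open>Blocks of independent standard normal variables\<close>

definition block :: "(nat \<Rightarrow> nat) \<Rightarrow> nat \<Rightarrow> nat set" where
  "block I l = {(\<Sum>k=1..l-1. I k) + 1 .. \<Sum>k=1..l. I k}"

lemma block_Suc: "block I (Suc l) = {(\<Sum>k=1..l. I k) + 1 .. (\<Sum>k=1..l. I k) + I (Suc l)}"
  by (simp add: block_def)

lemma finite_block [simp]: "finite (block I l)"
  by (simp add: block_def)

lemma card_block: "1 \<le> l \<Longrightarrow> card (block I l) = I l"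
  by (cases l) (auto simp: block_Suc)

lemma sum_partial_sum_eq_sum_blocks:
  "(\<Sum>j=1..(\<Sum>k=1..i. I k). f j) = (\<Sum>l=1..i. \<Sum>j\<in>block I l. f j)"
proof (induction i)
  case (Suc i)
  have "(\<Sum>k=1..Suc i. I k) = (\<Sum>k=1..i. I k) + I (Suc i)"
    by simp
  then have "(\<Sum>j=1..(\<Sum>k=1..Suc i. I k). f j)
      = (\<Sum>j=1..(\<Sum>k=1..i. I k). f j) + (\<Sum>j\<in>block I (Suc i). f j)"
    unfolding block_Suc by (simp only:) (rule sum.ub_add_nat, simp)
  then show ?case
    using Suc by simp
qed simp

lemma disjoint_family_on_block: "disjoint_family_on (block I) L"
proof -
  have "block I a \<inter> block I b = {}" if "a < b" for a b
  proof -
    have "(\<Sum>k=1..a. I k) \<le> (\<Sum>k=1..b-1. I k)"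
      using that by (intro sum_mono2) auto
    then show ?thesis
      unfolding block_def by auto
  qed
  then show ?thesis
    unfolding disjoint_family_on_def by (metis inf_commute linorder_neqE_nat)
qed

lemma (in prob_space) indep_vars_block_sum_squares:
  fixes z :: "nat \<Rightarrow> 'a \<Rightarrow> real"
  assumes "indep_vars (\<lambda>_. borel) z UNIV"
  shows "indep_vars (\<lambda>_. borel) (\<lambda>l \<omega>. \<Sum>j\<in>block I l. (z j \<omega>)\<^sup>2) L"
proof -
  have "indep_vars (\<lambda>l. PiM (block I l) (\<lambda>_. borel)) (\<lambda>l \<omega>. restrict (\<lambda>j. z j \<omega>) (block I l)) L"
    by (rule indep_vars_restrict[OF assms]) (auto simp: disjoint_family_on_block)
  then have "indep_vars (\<lambda>_. borel)
      (\<lambda>l \<omega>. (\<lambda>f. \<Sum>j\<in>block I l. (f j)\<^sup>2) (restrict (\<lambda>j. z j \<omega>) (block I l))) L"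
    by (rule indep_vars_compose2) measurable
  then show ?thesis
    by (simp cong: sum.cong)
qed

lemma (in prob_space) distributed_block_sum_squares:
  assumes "indep_vars (\<lambda>_. borel) z UNIV"
    and "\<And>j. distributed M lborel (z j) std_normal_density"
    and "1 \<le> l" "0 < I l"
  shows "distributed M lborel (\<lambda>\<omega>. \<Sum>j\<in>block I l. (z j \<omega>)\<^sup>2) (chi2_density (I l))"
proof -
  have "card (block I l) = I l"
    using assms(3) by (rule card_block)
  then have "block I l \<noteq> {}"
    using assms(4) by auto
  then show ?thesis
    using distributed_sum_squares_std_normal[of "block I l" z] assms \<open>card (block I l) = I l\<close>
      indep_vars_subset[OF assms(1)] by auto
qed

section \<open>The recursions for h and g\<close>

lemma hseq_bounds:
  assumes "\<forall>i\<in>{1..n}. 0 \<le> u i \<and> u i < 1/2"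
  shows "0 \<le> hseq u n \<and> 0 < 1 - 2 * hseq u n"
  using assms
proof (induction n)
  case (Suc n)
  then have h: "0 \<le> hseq u n" "0 < 1 - 2 * hseq u n"
    and u: "0 \<le> u (Suc n)" "u (Suc n) < 1/2" by auto
  have "1 - 2 * hseq u (Suc n) = (1 - 2 * hseq u n) * (1 - 2 * u (Suc n))"
    by (simp add: algebra_simps)
  then show ?case
    using h u by simp
qed simp

lemma gseq_eq_prod:
  "gseq m I r u n = (\<Prod>j=1..n. exp (- (hseq u j - hseq u (j - 1)) * (r (m - j + 1))\<^sup>2)
                               * (1 - 2 * hseq u j) powr (- real (I (m - j + 1)) / 2))"
  by (induction n) (simp_all add: algebra_simps)

lemma gseq_eq_prod_rev:
  assumes "1 \<le> m"
  shows "gseq m I r u (m - 1) = (\<Prod>i=2..m. exp (- (hseq u (m + 1 - i) - hseq u (m - i)) * (r i)\<^sup>2)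
                                         * (1 - 2 * hseq u (m + 1 - i)) powr (- real (I i) / 2))"
  unfolding gseq_eq_prod
  by (rule prod.reindex_bij_witness[where i="\<lambda>i. m + 1 - i" and j="\<lambda>j. m + 1 - j"])
    (use assms in \<open>auto simp: Suc_diff_le\<close>)

lemma sum_rev_diff:
  fixes f :: "nat \<Rightarrow> 'b::ab_group_add"
  assumes "p \<le> m"
  shows "(\<Sum>i=p..m. f (m + 1 - i) - f (m - i)) = f (m + 1 - p) - f 0"
proof -
  have "(\<Sum>i=p..m. f (m + 1 - i) - f (m - i)) = (\<Sum>j=0..m-p. f (Suc j) - f j)"
    by (rule sum.reindex_bij_witness[where i="\<lambda>j. m - j" and j="\<lambda>i. m - i"])
      (use assms in \<open>auto simp: Suc_diff_le\<close>)
  also have "\<dots> = f (m + 1 - p) - f 0"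
    using assms by (simp add: sum_Suc_diff Suc_diff_le)
  finally show ?thesis .
qed

lemma gseq_eq_exp_prod:
  assumes "1 \<le> m" and v: "\<And>i. v i = hseq u (m + 1 - i) - hseq u (m - i)"
  shows "gseq m I r u (m - 1) = exp (- (\<Sum>i=2..m. v i * (r i)\<^sup>2))
           * (\<Prod>l\<in>{2..m}. (1 - 2 * (\<Sum>i=max 2 l..m. v i)) powr (- real (I l) / 2))"
proof -
  have "exp (- (\<Sum>i=2..m. v i * (r i)\<^sup>2)) = (\<Prod>i=2..m. exp (- v i * (r i)\<^sup>2))"
    by (simp add: exp_sum sum_negf[symmetric])
  moreover have "(\<Prod>l\<in>{2..m}. (1 - 2 * (\<Sum>i=max 2 l..m. v i)) powr (- real (I l) / 2))
      = (\<Prod>i=2..m. (1 - 2 * hseq u (m + 1 - i)) powr (- real (I i) / 2))"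
  proof (intro prod.cong refl)
    fix l assume "l \<in> {2..m}"
    then show "(1 - 2 * (\<Sum>i=max 2 l..m. v i)) powr (- real (I l) / 2)
        = (1 - 2 * hseq u (m + 1 - l)) powr (- real (I l) / 2)"
      using sum_rev_diff[of l m "hseq u"] by (simp add: v)
  qed
  ultimately show ?thesis
    using assms by (subst gseq_eq_prod_rev) (simp_all add: prod.distrib v)
qed

lemma (in prob_space) prob_Inter_diff_Inter:
  fixes S :: "nat \<Rightarrow> 'a \<Rightarrow> real" and r :: "nat \<Rightarrow> real"
  assumes m: "2 \<le> m" and [measurable]: "\<And>i. S i \<in> borel_measurable M"
  defines "E \<equiv> \<lambda>i. {\<omega>\<in>space M. r i < S i \<omega>}"
  shows "prob (\<Inter>i\<in>{2..m}. E i) - prob (\<Inter>i\<in>{1..m}. E i)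
       = prob {\<omega>\<in>space M. S 1 \<omega> \<le> r 1 \<and> (\<forall>i\<in>{2..m}. r i < S i \<omega>)}"
proof -
  have "E i \<in> events" for i
    unfolding E_def by measurable
  then have "prob (\<Inter>i\<in>{2..m}. E i) - prob (\<Inter>i\<in>{1..m}. E i)
      = prob ((\<Inter>i\<in>{2..m}. E i) - (\<Inter>i\<in>{1..m}. E i))"
    using m by (intro finite_measure_Diff[symmetric] sets.finite_INT INT_anti_mono) auto
  moreover have "{1..m} = insert 1 {2..m}"
    using m by auto
  ultimately show ?thesis
    using m unfolding E_def by (auto simp: not_less intro!: arg_cong[where f=prob])
qed

lemma (in prob_space) prob_Inter_diff_le_gseq:
  fixes z :: "nat \<Rightarrow> 'a \<Rightarrow> real" and I :: "nat \<Rightarrow> nat" and r u :: "nat \<Rightarrow> real"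
  assumes indep: "indep_vars (\<lambda>_. borel) z UNIV"
    and normal: "\<And>j. distributed M lborel (z j) std_normal_density"
    and m: "2 \<le> m" and I: "\<And>i. i \<in> {1..m} \<Longrightarrow> I i > 0"
    and u: "\<forall>i\<in>{1..m}. 0 \<le> u i \<and> u i < 1/2"
  defines "\<zeta> \<equiv> \<lambda>i. {\<omega> \<in> space M. (\<Sum>j=1..(\<Sum>k=1..i. I k). (z j \<omega>)\<^sup>2) > (r i)\<^sup>2}"
  shows "prob (\<Inter>i\<in>{2..m}. \<zeta> i) - prob (\<Inter>i\<in>{1..m}. \<zeta> i)
    \<le> gseq m I r u (m - 1) * chi2_cdf (I 1) ((1 - 2 * hseq u (m - 1)) * (r 1)\<^sup>2)
       / (1 - 2 * hseq u (m - 1)) powr (real (I 1) / 2)"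
proof -
  have [measurable]: "z j \<in> borel_measurable M" for j
    using distributed_measurable[OF normal[of j]] by simp
  define T where "T l \<omega> = (\<Sum>j\<in>block I l. (z j \<omega>)\<^sup>2)" for l \<omega>
  have [measurable]: "T l \<in> borel_measurable M" for l
    unfolding T_def by measurable
  define v where "v i = hseq u (m + 1 - i) - hseq u (m - i)" for i
  have weights: "(\<Sum>i=max 2 l..m. v i) = hseq u (m + 1 - max 2 l)" if "l \<le> m" for l
    using m that sum_rev_diff[of "max 2 l" m "hseq u"] unfolding v_def by simp
  have h: "0 \<le> hseq u j \<and> 0 < 1 - 2 * hseq u j" if "j \<le> m" for j
    using that u by (intro hseq_bounds) auto
  have "\<zeta> = (\<lambda>i. {\<omega> \<in> space M. (r i)\<^sup>2 < (\<Sum>l=1..i. T l \<omega>)})"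
    unfolding \<zeta>_def T_def sum_partial_sum_eq_sum_blocks ..
  then have "prob (\<Inter>i\<in>{2..m}. \<zeta> i) - prob (\<Inter>i\<in>{1..m}. \<zeta> i)
      = prob {\<omega>\<in>space M. T 1 \<omega> \<le> (r 1)\<^sup>2 \<and> (\<forall>i\<in>{2..m}. (r i)\<^sup>2 < (\<Sum>l=1..i. T l \<omega>))}"
    using prob_Inter_diff_Inter[OF m, of "\<lambda>i \<omega>. \<Sum>l=1..i. T l \<omega>"] by simp
  also have "\<dots> \<le> exp (- (\<Sum>i=2..m. v i * (r i)\<^sup>2))
      * ((1 - 2 * (\<Sum>i=max 2 1..m. v i)) powr (- real (I 1) / 2)
         * chi2_cdf (I 1) ((1 - 2 * (\<Sum>i=max 2 1..m. v i)) * (r 1)\<^sup>2))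
      * (\<Prod>l\<in>{2..m}. (1 - 2 * (\<Sum>i=max 2 l..m. v i)) powr (- real (I l) / 2))"
  proof (rule prob_partial_sums_chi2_le)
    show "indep_vars (\<lambda>_. borel) T {1..m}"
      unfolding T_def by (rule indep_vars_block_sum_squares[OF indep])
    show "distributed M lborel (T l) (chi2_density (I l))" if "l \<in> {1..m}" for l
      unfolding T_def using that I by (intro distributed_block_sum_squares[OF indep normal]) auto
    show "0 \<le> v i" if "i \<in> {2..m}" for i
    proof -
      have "v i = u (Suc (m - i)) * (1 - 2 * hseq u (m - i))"
        using that by (simp add: v_def Suc_diff_le)
      then show ?thesis
        using that u h[of "m - i"] by auto
    qed
    show "(\<Sum>i=max 2 l..m. v i) < 1/2" if "l \<in> {1..m}" for l
    proof -
      have "m + 1 - max 2 l \<le> m"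
        by (auto simp: max_def)
      then show ?thesis
        using that h[of "m + 1 - max 2 l"] weights[of l] by auto
    qed
  qed (use m in simp_all)
  also have "\<dots> = (exp (- (\<Sum>i=2..m. v i * (r i)\<^sup>2))
        * (\<Prod>l\<in>{2..m}. (1 - 2 * (\<Sum>i=max 2 l..m. v i)) powr (- real (I l) / 2)))
      * ((1 - 2 * (\<Sum>i=max 2 1..m. v i)) powr (- real (I 1) / 2)
         * chi2_cdf (I 1) ((1 - 2 * (\<Sum>i=max 2 1..m. v i)) * (r 1)\<^sup>2))"
    by (simp only: ac_simps)
  also have "\<dots> = gseq m I r u (m - 1)
      * ((1 - 2 * hseq u (m - 1)) powr (- real (I 1) / 2)
         * chi2_cdf (I 1) ((1 - 2 * hseq u (m - 1)) * (r 1)\<^sup>2))"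
    using m weights[of 1] gseq_eq_exp_prod[of m v u I r] by (simp add: v_def)
  finally show ?thesis
    by (simp add: powr_minus_divide)
qed

theorem corollary1:
  fixes M :: "'a measure" and z :: "nat \<Rightarrow> 'a \<Rightarrow> real"
    and m :: nat and I :: "nat \<Rightarrow> nat" and r :: "nat \<Rightarrow> real"
  assumes "prob_space M"
    and "prob_space.indep_vars M (\<lambda>_. borel) z UNIV"
    and "\<And>j. distributed M lborel (z j) std_normal_density"
    and "m \<ge> 2"
    and "\<And>i. i \<in> {1..m} \<Longrightarrow> I i > 0"
    and "\<And>i. i \<in> {1..m} \<Longrightarrow> r i > 0"
  defines "\<zeta> \<equiv> (\<lambda>i. {\<omega> \<in> space M. (\<Sum>j=1..(\<Sum>k=1..i. I k). (z j \<omega>)\<^sup>2) > (r i)\<^sup>2})"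
    and "U \<equiv> {u :: nat \<Rightarrow> real. \<forall>i\<in>{1..m}. 0 \<le> u i \<and> u i < 1/2}"
  shows "measure M (\<Inter>i\<in>{1..m}. \<zeta> i) \<ge>
           max 0 (measure M (\<Inter>i\<in>{2..m}. \<zeta> i)
             - (INF u\<in>U. gseq m I r u (m - 1)
                   * chi2_cdf (I 1) ((1 - 2 * hseq u (m - 1)) * (r 1)\<^sup>2)
                   / (1 - 2 * hseq u (m - 1)) powr (real (I 1) / 2)))"
proof -
  interpret prob_space M by fact
  have "measure M (\<Inter>i\<in>{2..m}. \<zeta> i) - measure M (\<Inter>i\<in>{1..m}. \<zeta> i)
      \<le> (INF u\<in>U. gseq m I r u (m - 1)
                   * chi2_cdf (I 1) ((1 - 2 * hseq u (m - 1)) * (r 1)\<^sup>2)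
                   / (1 - 2 * hseq u (m - 1)) powr (real (I 1) / 2))"
  proof (rule cINF_greatest)
    show "U \<noteq> {}"
      unfolding U_def by (auto intro!: exI[of _ "\<lambda>_. 0"])
    show "measure M (\<Inter>i\<in>{2..m}. \<zeta> i) - measure M (\<Inter>i\<in>{1..m}. \<zeta> i)
        \<le> gseq m I r u (m - 1) * chi2_cdf (I 1) ((1 - 2 * hseq u (m - 1)) * (r 1)\<^sup>2)
          / (1 - 2 * hseq u (m - 1)) powr (real (I 1) / 2)" if "u \<in> U" for u
      unfolding \<zeta>_def
      by (rule prob_Inter_diff_le_gseq[OF assms(2-5)]) (use that in \<open>auto simp: U_def\<close>)
  qed
  then show ?thesis
    by simp
qed

end
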